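(* Let $R$ be a ring such that every RD-essential extension of left $R$-modules is essential. Then for every two-sided ideal $A$ of $R$, every RD-essential extension of left $R/A$-modules is essential.
   Context: Over a ring $S$, a short exact sequence of left $S$-modules is RD-pure if it remains exact after tensoring with every right module $S/sS$, $s\in S$. An extension $M\subseteq N$ is RD-essential if $M$ is RD-pure in $N$ and for every submodule $K$ of $N$, either $K\cap M\neq0$ or $(M+K)/K$ is not RD-pure in $N/K$. *)

theory Defs
  imports "HOL-Algebra.Module" "HOL-Algebra.QuotRing"
begin

text \<open>Left modules over a (not necessarily commutative) unital ring R.
  The library locale module requires a commutative ring, so we use the
  same axioms over an arbitrary ring.\<close>

definition lmodule :: "('a,'c) ring_scheme \<Rightarrow> ('a,'b,'d) module_scheme \<Rightarrow> bool" where
  "lmodule R M \<longleftrightarrow> ring R \<and> abelian_group M \<and>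
    (\<forall>a\<in>carrier R. \<forall>x\<in>carrier M. a \<odot>\<^bsub>M\<^esub> x \<in> carrier M) \<and>
    (\<forall>a\<in>carrier R. \<forall>b\<in>carrier R. \<forall>x\<in>carrier M.
        (a \<oplus>\<^bsub>R\<^esub> b) \<odot>\<^bsub>M\<^esub> x = a \<odot>\<^bsub>M\<^esub> x \<oplus>\<^bsub>M\<^esub> b \<odot>\<^bsub>M\<^esub> x) \<and>
    (\<forall>a\<in>carrier R. \<forall>x\<in>carrier M. \<forall>y\<in>carrier M.
        a \<odot>\<^bsub>M\<^esub> (x \<oplus>\<^bsub>M\<^esub> y) = a \<odot>\<^bsub>M\<^esub> x \<oplus>\<^bsub>M\<^esub> a \<odot>\<^bsub>M\<^esub> y) \<and>
    (\<forall>a\<in>carrier R. \<forall>b\<in>carrier R. \<forall>x\<in>carrier M.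
        (a \<otimes>\<^bsub>R\<^esub> b) \<odot>\<^bsub>M\<^esub> x = a \<odot>\<^bsub>M\<^esub> (b \<odot>\<^bsub>M\<^esub> x)) \<and>
    (\<forall>x\<in>carrier M. \<one>\<^bsub>R\<^esub> \<odot>\<^bsub>M\<^esub> x = x)"

definition lsubmodule :: "('a,'c) ring_scheme \<Rightarrow> ('a,'b,'d) module_scheme \<Rightarrow> 'b set \<Rightarrow> bool" where
  "lsubmodule R N M \<longleftrightarrow> additive_subgroup M N \<and>
    (\<forall>a\<in>carrier R. \<forall>x\<in>M. a \<odot>\<^bsub>N\<^esub> x \<in> M)"

definition smult_set :: "('a,'b,'d) module_scheme \<Rightarrow> 'a \<Rightarrow> 'b set \<Rightarrow> 'b set" where
  "smult_set N s X = (\<lambda>x. s \<odot>\<^bsub>N\<^esub> x) ` X"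

text \<open>Quotient module N/K: carrier the cosets of K, induced operations.
  (The ring multiplication/one fields are irrelevant for modules.)\<close>

definition quot_module :: "('a,'b,'d) module_scheme \<Rightarrow> 'b set \<Rightarrow> ('a, 'b set) module" where
  "quot_module N K =
    \<lparr>carrier = a_rcosets\<^bsub>N\<^esub> K, monoid.mult = (\<lambda>X Y. K), one = K,
     zero = K, add = set_add N,
     smult = (\<lambda>s X. K <+>\<^bsub>N\<^esub> smult_set N s X)\<rparr>"

text \<open>For a left S-module N, (S/sS) \<otimes>_S N is canonically N/sN,
  and tensoring 0 -> M -> N -> N/M -> 0 with S/sS is always right exact;
  exactness thus amounts to injectivity of M/sM -> N/sN, i.e.
  every element of M lying in sN lies in sM.\<close>

definition rd_pure :: "('a,'c) ring_scheme \<Rightarrow> ('a,'b,'d) module_scheme \<Rightarrow> 'b set \<Rightarrow> bool" where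
  "rd_pure S N M \<longleftrightarrow> lsubmodule S N M \<and>
    (\<forall>s\<in>carrier S. \<forall>x\<in>M. x \<in> smult_set N s (carrier N) \<longrightarrow> x \<in> smult_set N s M)"

definition essential_ext :: "('a,'c) ring_scheme \<Rightarrow> ('a,'b,'d) module_scheme \<Rightarrow> 'b set \<Rightarrow> bool" where
  "essential_ext S N M \<longleftrightarrow> lsubmodule S N M \<and>
    (\<forall>K. lsubmodule S N K \<and> K \<noteq> {\<zero>\<^bsub>N\<^esub>} \<longrightarrow> K \<inter> M \<noteq> {\<zero>\<^bsub>N\<^esub>})"

definition rd_essential_ext :: "('a,'c) ring_scheme \<Rightarrow> ('a,'b,'d) module_scheme \<Rightarrow> 'b set \<Rightarrow> bool" where
  "rd_essential_ext S N M \<longleftrightarrow> rd_pure S N M \<and>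
    (\<forall>K. lsubmodule S N K \<and> K \<noteq> {\<zero>\<^bsub>N\<^esub>} \<longrightarrow>
       K \<inter> M \<noteq> {\<zero>\<^bsub>N\<^esub>} \<or>
       \<not> rd_pure S (quot_module N K) ((\<lambda>x. K +>\<^bsub>N\<^esub> x) ` (M <+>\<^bsub>N\<^esub> K)))"

end

theory Submission
  imports Defs
begin

text \<open>Along the quotient map \<open>R \<rightarrow> R/A\<close>, every left \<open>R/A\<close>-module \<open>N\<close> becomes a left
  \<open>R\<close>-module with the same underlying group. Since the map is surjective, the \<open>R\<close>- and
  \<open>R/A\<close>-submodules of \<open>N\<close> coincide, as do the sets \<open>sX\<close>, the quotient modules, and hence
  RD-purity, essentiality and RD-essentiality. An RD-essential extension of \<open>R/A\<close>-modules
  is therefore an RD-essential extension of \<open>R\<close>-modules, hence essential by hypothesis,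
  hence essential over \<open>R/A\<close>.\<close>

definition scalar_restriction :: "('a \<Rightarrow> 's) \<Rightarrow> ('s, 'b) module \<Rightarrow> ('a, 'b) module" where
  "scalar_restriction f N =
    \<lparr>carrier = carrier N, monoid.mult = monoid.mult N, one = one N, zero = zero N,
     add = add N, smult = (\<lambda>r x. f r \<odot>\<^bsub>N\<^esub> x)\<rparr>"

lemma scalar_restriction_simps [simp]:
  "carrier (scalar_restriction f N) = carrier N"
  "add (scalar_restriction f N) = add N"
  "zero (scalar_restriction f N) = zero N"
  "smult (scalar_restriction f N) r = smult N (f r)"
  by (simp_all add: scalar_restriction_def)

lemma additive_subgroup_scalar_restriction_iff:
  "additive_subgroup X (scalar_restriction f N) \<longleftrightarrow> additive_subgroup X N"
  by (simp add: additive_subgroup_def subgroup_def m_inv_def)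

lemma set_add_scalar_restriction: "set_add (scalar_restriction f N) = set_add N"
  by (simp add: set_add_def set_mult_def [abs_def])

lemma a_r_coset_scalar_restriction: "a_r_coset (scalar_restriction f N) = a_r_coset N"
  by (simp add: a_r_coset_def r_coset_def [abs_def])

lemma a_rcosets_scalar_restriction:
  "a_rcosets\<^bsub>scalar_restriction f N\<^esub> K = a_rcosets\<^bsub>N\<^esub> K"
  by (simp add: A_RCOSETS_def RCOSETS_def r_coset_def)

lemma smult_set_scalar_restriction:
  "smult_set (scalar_restriction f N) r X = smult_set N (f r) X"
  by (simp add: smult_set_def)

lemma quot_module_scalar_restriction:
  "quot_module (scalar_restriction f N) K = scalar_restriction f (quot_module N K)"
  unfolding quot_module_def a_rcosets_scalar_restriction set_add_scalar_restriction
    smult_set_scalar_restriction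
  by (simp add: scalar_restriction_def)

lemma lmodule_scalar_restriction:
  assumes "ring R" and hom: "f \<in> ring_hom R S" and "lmodule S N"
  shows "lmodule R (scalar_restriction f N)"
proof -
  interpret abelian_group N
    using \<open>lmodule S N\<close> by (simp add: lmodule_def)
  have "abelian_group (scalar_restriction f N)"
    by (rule abelian_groupI) (auto simp: a_ac)
  moreover have "f r \<in> carrier S" if "r \<in> carrier R" for r
    using hom that by (rule ring_hom_closed)
  ultimately show ?thesis
    using assms by (simp add: lmodule_def ring_hom_add ring_hom_mult ring_hom_one)
qed

context
  fixes f :: "'a \<Rightarrow> 's" and R :: "('a, 'c) ring_scheme" and S :: "('s, 'd) ring_scheme"
  assumes surj: "f ` carrier R = carrier S"
begin

lemma ball_carrier_surj: "(\<forall>r\<in>carrier R. P (f r)) \<longleftrightarrow> (\<forall>s\<in>carrier S. P s)"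
  by (simp flip: surj)

lemma lsubmodule_scalar_restriction_iff:
  "lsubmodule R (scalar_restriction f N) X \<longleftrightarrow> lsubmodule S N X"
  unfolding lsubmodule_def additive_subgroup_scalar_restriction_iff
  using ball_carrier_surj [of "\<lambda>s. \<forall>x\<in>X. s \<odot>\<^bsub>N\<^esub> x \<in> X"] by simp

lemma rd_pure_scalar_restriction_iff:
  "rd_pure R (scalar_restriction f N) X \<longleftrightarrow> rd_pure S N X"
  unfolding rd_pure_def lsubmodule_scalar_restriction_iff smult_set_scalar_restriction
  using ball_carrier_surj
    [of "\<lambda>s. \<forall>x\<in>X. x \<in> smult_set N s (carrier N) \<longrightarrow> x \<in> smult_set N s X"]
  by simp

lemma essential_ext_scalar_restriction_iff:
  "essential_ext R (scalar_restriction f N) M \<longleftrightarrow> essential_ext S N M"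
  by (simp add: essential_ext_def lsubmodule_scalar_restriction_iff)

lemma rd_essential_ext_scalar_restriction_iff:
  "rd_essential_ext R (scalar_restriction f N) M \<longleftrightarrow> rd_essential_ext S N M"
  by (simp add: rd_essential_ext_def rd_pure_scalar_restriction_iff
      lsubmodule_scalar_restriction_iff quot_module_scalar_restriction
      set_add_scalar_restriction a_r_coset_scalar_restriction)

end

lemma (in ideal) rcos_image_carrier: "(+>) I ` carrier R = carrier (R Quot I)"
  by (auto simp: FactRing_def A_RCOSETS_def RCOSETS_def a_r_coset_def)

theorem proposition2p7:
  fixes R :: "('a, 'c) ring_scheme"
  assumes "ring R"
    and hyp: "\<forall>(N :: ('a, 'm) module) M.
               lmodule R N \<and> rd_essential_ext R N M \<longrightarrow> essential_ext R N M"
    and "ideal A R"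
  shows "\<forall>(N :: ('a set, 'm) module) M.
           lmodule (R Quot A) N \<and> rd_essential_ext (R Quot A) N M \<longrightarrow>
           essential_ext (R Quot A) N M"
proof (intro allI impI, elim conjE)
  fix N :: "('a set, 'm) module" and M
  assume "lmodule (R Quot A) N" and "rd_essential_ext (R Quot A) N M"
  let ?N = "scalar_restriction ((+>\<^bsub>R\<^esub>) A) N"
  have hom: "(+>\<^bsub>R\<^esub>) A \<in> ring_hom R (R Quot A)"
    and surj: "(+>\<^bsub>R\<^esub>) A ` carrier R = carrier (R Quot A)"
    using \<open>ideal A R\<close> by (simp_all add: ideal.rcos_ring_hom ideal.rcos_image_carrier)
  have "lmodule R ?N"
    using \<open>ring R\<close> hom \<open>lmodule (R Quot A) N\<close> by (rule lmodule_scalar_restriction)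
  moreover have "rd_essential_ext R ?N M"
    using \<open>rd_essential_ext (R Quot A) N M\<close>
    by (simp add: rd_essential_ext_scalar_restriction_iff [OF surj])
  ultimately have "essential_ext R ?N M"
    using hyp by blast
  then show "essential_ext (R Quot A) N M"
    by (simp add: essential_ext_scalar_restriction_iff [OF surj])
qed

end
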